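(* Let $\varepsilon>0$, $\beta\in(0,1)$ and let $G$ be a graph with at least one edge. Run the following randomized procedure: set $T=-\frac{4}{\varepsilon}\ln\frac{2}{\beta}$ and $\tilde T=T+\mathrm{Lap}(2/\varepsilon)$; for $\tau=1,2,3,\dots$ compute $\tilde Q_\tau=Q_{\mathrm{Del\text{-}Deg}}(G,\tau)+\mathrm{Lap}(2/\varepsilon)$ (fresh independent noise each time) and output the first $\tau$ with $\tilde Q_\tau>\tilde T$. Then with probability at least $1-\beta$, the output $\tau$ satisfies $\tau\le\deg(G)$ and $$|Q_{\mathrm{Del\text{-}Deg}}(G,\tau)|\le\frac{4}{\varepsilon}\ln\deg(G)+\frac{8}{\varepsilon}\ln\frac{2}{\beta}.$$
   Context: Graphs are finite, simple, undirected; $\deg_G(v)$ is the degree of $v$ and $\deg(G)$ the maximum degree. $Q_{\mathrm{Del\text{-}Deg}}(G,\tau)=-\tfrac12\sum_{v:\deg_G(v)\ge\tau}(\deg_G(v)-\tau)$. $\mathrm{Lap}(b)$ denotes a random variable with density $\frac{1}{2b}e^{-|x|/b}$; all Laplace draws are independent. *)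

theory Defs
  imports "HOL-Probability.Probability"
begin

definition simple_graph :: "'a set \<Rightarrow> ('a \<Rightarrow> 'a \<Rightarrow> bool) \<Rightarrow> bool" where
  "simple_graph V E \<longleftrightarrow> finite V \<and> (\<forall>u v. E u v \<longrightarrow> u \<in> V \<and> v \<in> V)
      \<and> (\<forall>u v. E u v \<longrightarrow> E v u) \<and> (\<forall>v. \<not> E v v)"

definition gdeg :: "'a set \<Rightarrow> ('a \<Rightarrow> 'a \<Rightarrow> bool) \<Rightarrow> 'a \<Rightarrow> nat" where
  "gdeg V E v = card {u \<in> V. E v u}"

definition max_deg :: "'a set \<Rightarrow> ('a \<Rightarrow> 'a \<Rightarrow> bool) \<Rightarrow> nat" where
  "max_deg V E = Max (gdeg V E ` V)"

definition Q_del_deg :: "'a set \<Rightarrow> ('a \<Rightarrow> 'a \<Rightarrow> bool) \<Rightarrow> nat \<Rightarrow> real" where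
  "Q_del_deg V E \<tau> = - (1/2) * (\<Sum>v\<in>{v \<in> V. gdeg V E v \<ge> \<tau>}. (real (gdeg V E v) - real \<tau>))"

definition laplace_density :: "real \<Rightarrow> real \<Rightarrow> real" where
  "laplace_density b x = exp (- \<bar>x\<bar> / b) / (2 * b)"

definition laplace :: "real \<Rightarrow> real measure" where
  "laplace b = density lborel (\<lambda>x. ennreal (laplace_density b x))"

text \<open>Noise space: \<omega> 0 is the threshold noise, \<omega> \<tau> (\<tau> \<ge> 1) the noise of query \<tau>;
  all i.i.d. Lap(b).\<close>
definition noise_space :: "real \<Rightarrow> (nat \<Rightarrow> real) measure" where
  "noise_space b = (\<Pi>\<^sub>M i\<in>(UNIV :: nat set). laplace b)"

definition sv_output :: "(nat \<Rightarrow> real) \<Rightarrow> real \<Rightarrow> (nat \<Rightarrow> real) \<Rightarrow> nat option" where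
  "sv_output q T \<omega> =
     (if \<exists>\<tau>\<ge>1. q \<tau> + \<omega> \<tau> > T + \<omega> 0
      then Some (LEAST \<tau>. \<tau> \<ge> 1 \<and> q \<tau> + \<omega> \<tau> > T + \<omega> 0) else None)"

end

theory Submission
  imports Defs "HOL-Real_Asymp.Real_Asymp"
begin

(* With b = 2/\<epsilon> and c = b ln (2/\<beta>) the threshold is T = -2c, while the query
   Q_del_deg, which is nonpositive, vanishes at \<tau> = deg G. Unless the threshold noise has
   size at least c (probability at most \<beta>/2), the noise at deg G is at most -c
   (probability at most \<beta>/4), or one of the deg G query noises reaches c + b ln (deg G)
   (probability at most \<beta>/4 by a union bound), the procedure stops at some \<tau> \<le> deg G,
   and at that \<tau> the noisy comparison forces Q_del_deg \<tau> > T - 2c - b ln (deg G). *)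

lemma laplace_density_borel [measurable]: "laplace_density b \<in> borel_measurable borel"
  unfolding laplace_density_def by measurable

lemma sets_laplace [simp, measurable_cong]: "sets (laplace b) = sets borel"
  by (simp add: laplace_def)

lemma space_laplace [simp]: "space (laplace b) = UNIV"
  by (simp add: laplace_def)

lemma emeasure_laplace:
  "A \<in> sets borel \<Longrightarrow>
     emeasure (laplace b) A = (\<integral>\<^sup>+x. ennreal (laplace_density b x) * indicator A x \<partial>lborel)"
  unfolding laplace_def by (subst emeasure_density) auto

lemma emeasure_laplace_atLeast:
  assumes "b > 0" and "t \<ge> 0"
  shows "emeasure (laplace b) {t..} = ennreal (exp (- t / b) / 2)"
proof -
  have "emeasure (laplace b) {t..} =
      (\<integral>\<^sup>+x. ennreal (exp (- x / b) / (2 * b)) * indicator {t..} x \<partial>lborel)"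
    using \<open>t \<ge> 0\<close> by (auto simp: emeasure_laplace laplace_density_def indicator_def
      intro!: nn_integral_cong)
  also have "\<dots> = ennreal (0 - (- exp (- t / b) / 2))"
  proof (rule nn_integral_FTC_atLeast)
    show "((\<lambda>x. - exp (- x / b) / 2) has_real_derivative exp (- x / b) / (2 * b)) (at x)" for x
      using \<open>b > 0\<close> by (auto intro!: derivative_eq_intros simp: field_simps)
    show "((\<lambda>x. - exp (- x / b) / 2) \<longlongrightarrow> 0) at_top"
      using \<open>b > 0\<close> by real_asymp
  qed (use \<open>b > 0\<close> in auto)
  finally show ?thesis
    by simp
qed

lemma emeasure_laplace_atMost:
  assumes "b > 0" and "t \<ge> 0"
  shows "emeasure (laplace b) {..-t} = ennreal (exp (- t / b) / 2)"
proof -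
  have "emeasure (laplace b) {..-t} =
      (\<integral>\<^sup>+x. ennreal (laplace_density b x) * indicator {..-t} x \<partial>distr lborel borel uminus)"
    by (simp add: emeasure_laplace lborel_distr_uminus)
  also have "\<dots> = (\<integral>\<^sup>+x. ennreal (laplace_density b x) * indicator {t..} x \<partial>lborel)"
    by (subst nn_integral_distr)
      (auto simp: laplace_density_def indicator_def intro!: nn_integral_cong)
  also have "\<dots> = emeasure (laplace b) {t..}"
    by (simp add: emeasure_laplace)
  finally show ?thesis
    using emeasure_laplace_atLeast[OF assms] by simp
qed

lemma null_sets_laplace_singleton: "{x} \<in> null_sets (laplace b)"
proof -
  have "{x} \<in> null_sets lborel"
    by (simp add: null_sets_def)
  then have "AE y in lborel. y \<in> {x} \<longrightarrow> ennreal (laplace_density b y) = 0"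
    by (rule AE_I') auto
  then show ?thesis
    unfolding laplace_def by (subst null_sets_density_iff) auto
qed

lemma prob_space_laplace:
  assumes "b > 0"
  shows "prob_space (laplace b)"
proof
  have "space (laplace b) = {..-0} \<union> {0..}"
    by auto
  then have "emeasure (laplace b) (space (laplace b)) = emeasure (laplace b) ({..-0} \<union> {0..})"
    by simp
  also have "\<dots> = emeasure (laplace b) {..-0} + emeasure (laplace b) {0..}"
  proof (rule emeasure_Un')
    have "{..-0} \<inter> {0..} = {0::real}"
      by auto
    then show "{..-0} \<inter> {0..} \<in> null_sets (laplace b)"
      by (simp add: null_sets_laplace_singleton)
  qed auto
  also have "\<dots> = ennreal (1/2) + ennreal (1/2)"
    using emeasure_laplace_atLeast[OF assms, of 0] emeasure_laplace_atMost[OF assms, of 0]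
    by simp
  also have "\<dots> = 1"
    by (subst ennreal_plus[symmetric]) auto
  finally show "emeasure (laplace b) (space (laplace b)) = 1" .
qed

lemma measure_laplace_atLeast:
  "b > 0 \<Longrightarrow> t \<ge> 0 \<Longrightarrow> measure (laplace b) {t..} = exp (- t / b) / 2"
  by (simp add: measure_def emeasure_laplace_atLeast)

lemma measure_laplace_atMost:
  "b > 0 \<Longrightarrow> t \<ge> 0 \<Longrightarrow> measure (laplace b) {..-t} = exp (- t / b) / 2"
  by (simp add: measure_def emeasure_laplace_atMost)

lemma measure_laplace_abs_ge:
  assumes "b > 0" and "t \<ge> 0"
  shows "measure (laplace b) {x. t \<le> \<bar>x\<bar>} \<le> exp (- t / b)"
proof -
  have "{x. t \<le> \<bar>x\<bar>} = {..-t} \<union> {t..}"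
    by auto
  then have "measure (laplace b) {x. t \<le> \<bar>x\<bar>} \<le> measure (laplace b) {..-t} + measure (laplace b) {t..}"
    by (simp add: measure_Un_le)
  then show ?thesis
    using assms by (simp add: measure_laplace_atLeast measure_laplace_atMost)
qed

lemma prob_space_noise_space: "b > 0 \<Longrightarrow> prob_space (noise_space b)"
  unfolding noise_space_def by (intro prob_space_PiM prob_space_laplace)

lemma noise_space_component_measurable [measurable]:
  "(\<lambda>\<omega>. \<omega> i) \<in> borel_measurable (noise_space b)"
proof -
  have "(\<lambda>\<omega>. \<omega> i) \<in> measurable (noise_space b) (laplace b)"
    unfolding noise_space_def by (rule measurable_component_singleton) simp
  then show ?thesis
    by (simp cong: measurable_cong_sets)
qed

lemma measure_noise_space_component:
  assumes "b > 0" and "A \<in> sets borel"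
  shows "measure (noise_space b) {\<omega> \<in> space (noise_space b). \<omega> i \<in> A} = measure (laplace b) A"
proof -
  have component: "(\<lambda>\<omega>. \<omega> i) \<in> measurable (noise_space b) (laplace b)"
    by (simp cong: measurable_cong_sets)
  have "distr (noise_space b) (laplace b) (\<lambda>\<omega>. \<omega> i) = laplace b"
    unfolding noise_space_def using assms by (intro distr_PiM_component prob_space_laplace) auto
  then have "measure (laplace b) A = measure (noise_space b) ((\<lambda>\<omega>. \<omega> i) -` A \<inter> space (noise_space b))"
    using measure_distr[OF component, of A] assms by simp
  then show ?thesis
    by (simp add: vimage_def Int_def conj_commute)
qed

lemma prob_noise_space_small_noise:
  assumes "b > 0" and "c \<ge> 0" and "c' \<ge> 0"
  shows "1 - (3/2 * exp (- c / b) + real D / 2 * exp (- c' / b)) \<le>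
    measure (noise_space b) {\<omega> \<in> space (noise_space b).
      \<bar>\<omega> 0\<bar> < c \<and> - c < \<omega> D \<and> (\<forall>\<tau>\<in>{1..D}. \<omega> \<tau> < c')}"
    (is "_ \<le> measure ?N ?small")
proof -
  interpret N: prob_space ?N
    using \<open>b > 0\<close> by (rule prob_space_noise_space)
  define event where "event i A = {\<omega> \<in> space ?N. \<omega> i \<in> A}" for i and A :: "real set"
  have event_sets [measurable]: "event i A \<in> sets ?N" if "A \<in> sets borel" for i A
    unfolding event_def using that by measurable
  have prob_event: "measure ?N (event i A) = measure (laplace b) A" if "A \<in> sets borel" for i A
    unfolding event_def using \<open>b > 0\<close> that by (rule measure_noise_space_component)
  define E0 ED E' where "E0 = event 0 {x. c \<le> \<bar>x\<bar>}" and "ED = event D {..-c}"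
    and "E' = (\<Union>\<tau>\<in>{1..D}. event \<tau> {c'..})"
  have "measure ?N E0 \<le> exp (- c / b)"
    using measure_laplace_abs_ge[OF \<open>b > 0\<close> \<open>c \<ge> 0\<close>] by (simp add: E0_def prob_event)
  moreover have "measure ?N ED = exp (- c / b) / 2"
    using assms by (simp add: ED_def prob_event measure_laplace_atMost)
  moreover have "measure ?N E' \<le> (\<Sum>\<tau>\<in>{1..D}. measure ?N (event \<tau> {c'..}))"
    unfolding E'_def by (rule N.finite_measure_subadditive_finite) auto
  moreover have "(\<Sum>\<tau>\<in>{1..D}. measure ?N (event \<tau> {c'..})) = real D / 2 * exp (- c' / b)"
    using assms by (simp add: prob_event measure_laplace_atLeast)
  moreover have "measure ?N (E0 \<union> ED \<union> E') \<le> measure ?N E0 + measure ?N ED + measure ?N E'"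
    using measure_Un_le[of "E0 \<union> ED" ?N E'] measure_Un_le[of E0 ?N ED]
    by (simp add: E0_def ED_def E'_def sets.finite_UN)
  moreover have "measure ?N (space ?N - ?small) \<le> measure ?N (E0 \<union> ED \<union> E')"
    by (intro N.finite_measure_mono) (auto simp: E0_def ED_def E'_def event_def sets.finite_UN)
  ultimately have "measure ?N (space ?N - ?small) \<le> 3/2 * exp (- c / b) + real D / 2 * exp (- c' / b)"
    by linarith
  then show ?thesis
    by (simp add: N.prob_compl)
qed

lemma sv_output_eq_Some_iff:
  "sv_output q T \<omega> = Some \<tau> \<longleftrightarrow>
     1 \<le> \<tau> \<and> q \<tau> + \<omega> \<tau> > T + \<omega> 0 \<and> (\<forall>\<sigma><\<tau>. 1 \<le> \<sigma> \<longrightarrow> \<not> q \<sigma> + \<omega> \<sigma> > T + \<omega> 0)"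
  (is "?L \<longleftrightarrow> ?R")
proof
  assume ?L
  then have ex: "\<exists>\<tau>\<ge>1. q \<tau> + \<omega> \<tau> > T + \<omega> 0"
    and \<tau>: "\<tau> = (LEAST \<tau>. \<tau> \<ge> 1 \<and> q \<tau> + \<omega> \<tau> > T + \<omega> 0)"
    by (auto simp: sv_output_def split: if_splits)
  show ?R
    using LeastI_ex[OF ex] not_less_Least[where P = "\<lambda>\<tau>. \<tau> \<ge> 1 \<and> q \<tau> + \<omega> \<tau> > T + \<omega> 0"]
    unfolding \<tau> by blast
next
  assume ?R
  moreover from this have "(LEAST \<tau>. \<tau> \<ge> 1 \<and> q \<tau> + \<omega> \<tau> > T + \<omega> 0) = \<tau>"
    by (intro Least_equality) (auto simp: not_less[symmetric])
  ultimately show ?L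
    by (auto simp: sv_output_def)
qed

lemma sets_noise_space_sv_output [measurable]:
  "{\<omega> \<in> space (noise_space b). \<exists>\<tau>. sv_output q T \<omega> = Some \<tau> \<and> P \<tau>} \<in> sets (noise_space b)"
  unfolding sv_output_eq_Some_iff by measurable

lemma sv_output_stops_early:
  assumes "1 \<le> D" and "T + 2 * c \<le> q D"
    and "\<bar>\<omega> 0\<bar> < c" and "- c < \<omega> D" and "\<forall>\<tau>\<in>{1..D}. \<omega> \<tau> < c'"
  shows "\<exists>\<tau>. sv_output q T \<omega> = Some \<tau> \<and> \<tau> \<le> D \<and> T - c - c' < q \<tau>"
proof -
  let ?above = "\<lambda>\<tau>. 1 \<le> \<tau> \<and> T + \<omega> 0 < q \<tau> + \<omega> \<tau>"
  have "?above D"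
    using assms by auto
  define \<tau> where "\<tau> = (LEAST \<tau>. ?above \<tau>)"
  have "?above \<tau>" and "\<tau> \<le> D"
    unfolding \<tau>_def using \<open>?above D\<close> by (rule LeastI, rule Least_le)
  moreover have "sv_output q T \<omega> = Some \<tau>"
    using \<open>?above D\<close> by (auto simp: sv_output_def \<tau>_def)
  moreover have "\<omega> \<tau> < c'"
    using assms(5) \<open>?above \<tau>\<close> \<open>\<tau> \<le> D\<close> by auto
  ultimately show ?thesis
    using assms(3) by (intro exI[of _ \<tau>]) (auto simp: abs_less_iff)
qed

lemma prob_sv_output_accurate:
  assumes "b > 0" and "0 < \<beta>" and "\<beta> \<le> 1" and "1 \<le> D"
    and "T + 2 * b * ln (2 / \<beta>) \<le> q D"
  shows "1 - \<beta> \<le> measure (noise_space b) {\<omega> \<in> space (noise_space b).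
    \<exists>\<tau>. sv_output q T \<omega> = Some \<tau> \<and> \<tau> \<le> D \<and> T - 2 * b * ln (2 / \<beta>) - b * ln D < q \<tau>}"
    (is "_ \<le> measure ?N ?accurate")
proof -
  interpret N: prob_space ?N
    using \<open>b > 0\<close> by (rule prob_space_noise_space)
  define c c' where "c = b * ln (2 / \<beta>)" and "c' = b * ln (2 * D / \<beta>)"
  have "c \<ge> 0" and "c' \<ge> 0"
    using assms by (simp_all add: c_def c'_def)
  have c': "c' = b * ln D + c"
    using assms by (simp add: c_def c'_def ln_mult ln_div algebra_simps)
  have "exp (- c / b) = \<beta> / 2" and "exp (- c' / b) = \<beta> / (2 * D)"
    using assms by (simp_all add: c_def c'_def exp_minus)
  then have "1 - \<beta> = 1 - (3/2 * exp (- c / b) + real D / 2 * exp (- c' / b))"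
    using assms by (simp add: field_simps)
  also have "\<dots> \<le> measure ?N {\<omega> \<in> space ?N. \<bar>\<omega> 0\<bar> < c \<and> - c < \<omega> D \<and> (\<forall>\<tau>\<in>{1..D}. \<omega> \<tau> < c')}"
    using \<open>b > 0\<close> \<open>c \<ge> 0\<close> \<open>c' \<ge> 0\<close> by (rule prob_noise_space_small_noise)
  also have "\<dots> \<le> measure ?N ?accurate"
  proof (intro N.finite_measure_mono subsetI)
    fix \<omega> assume "\<omega> \<in> {\<omega> \<in> space ?N. \<bar>\<omega> 0\<bar> < c \<and> - c < \<omega> D \<and> (\<forall>\<tau>\<in>{1..D}. \<omega> \<tau> < c')}"
    then show "\<omega> \<in> ?accurate"
      using sv_output_stops_early[of D T c q \<omega> c'] assms by (auto simp: c' c_def)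
  qed measurable
  finally show ?thesis .
qed

lemma gdeg_le_max_deg: "finite V \<Longrightarrow> v \<in> V \<Longrightarrow> gdeg V E v \<le> max_deg V E"
  unfolding max_deg_def by simp

lemma max_deg_pos:
  assumes "simple_graph V E" and "E u v"
  shows "max_deg V E > 0"
proof -
  have "finite V" and "u \<in> V" and "v \<in> V"
    using assms by (auto simp: simple_graph_def)
  then have "gdeg V E u > 0"
    using \<open>E u v\<close> by (auto simp: gdeg_def card_gt_0_iff)
  then show ?thesis
    using gdeg_le_max_deg[of V u E] \<open>finite V\<close> \<open>u \<in> V\<close> by linarith
qed

lemma Q_del_deg_nonpos: "Q_del_deg V E \<tau> \<le> 0"
  unfolding Q_del_deg_def by (auto intro!: sum_nonneg)

lemma Q_del_deg_max_deg:
  assumes "finite V"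
  shows "Q_del_deg V E (max_deg V E) = 0"
proof -
  have "gdeg V E v = max_deg V E" if "v \<in> V" and "max_deg V E \<le> gdeg V E v" for v
    using gdeg_le_max_deg[of V v E] assms that by simp
  then show ?thesis
    unfolding Q_del_deg_def by (auto intro!: sum.neutral)
qed

theorem mainTheorem3:
  fixes V :: "'a set" and E :: "'a \<Rightarrow> 'a \<Rightarrow> bool" and \<epsilon> \<beta> :: real
  assumes "simple_graph V E"
    and "\<exists>u v. E u v"
    and "\<epsilon> > 0" and "0 < \<beta>" and "\<beta> < 1"
  shows "measure (noise_space (2 / \<epsilon>))
     {\<omega> \<in> space (noise_space (2 / \<epsilon>)).
        \<exists>\<tau>. sv_output (Q_del_deg V E) (- (4 / \<epsilon>) * ln (2 / \<beta>)) \<omega> = Some \<tau>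
          \<and> \<tau> \<le> max_deg V E
          \<and> \<bar>Q_del_deg V E \<tau>\<bar> \<le> (4 / \<epsilon>) * ln (real (max_deg V E)) + (8 / \<epsilon>) * ln (2 / \<beta>)}
     \<ge> 1 - \<beta>"
proof -
  define b D q T where "b = 2 / \<epsilon>" and "D = max_deg V E" and "q = Q_del_deg V E"
    and "T = - (4 / \<epsilon>) * ln (2 / \<beta>)"
  have "b > 0"
    using assms by (simp add: b_def)
  interpret N: prob_space "noise_space b"
    using \<open>b > 0\<close> by (rule prob_space_noise_space)
  have "1 \<le> D"
    using max_deg_pos[OF assms(1)] assms(2) by (auto simp: D_def Suc_le_eq)
  have "T + 2 * b * ln (2 / \<beta>) \<le> q D"
    using assms by (simp add: T_def b_def q_def D_def Q_del_deg_max_deg simple_graph_def)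
  then have "1 - \<beta> \<le> measure (noise_space b) {\<omega> \<in> space (noise_space b).
      \<exists>\<tau>. sv_output q T \<omega> = Some \<tau> \<and> \<tau> \<le> D \<and> T - 2 * b * ln (2 / \<beta>) - b * ln D < q \<tau>}"
    using assms \<open>b > 0\<close> \<open>1 \<le> D\<close> by (intro prob_sv_output_accurate) auto
  also have "\<dots> \<le> measure (noise_space b) {\<omega> \<in> space (noise_space b).
      \<exists>\<tau>. sv_output q T \<omega> = Some \<tau> \<and> \<tau> \<le> D \<and> \<bar>q \<tau>\<bar> \<le> 2 * b * ln D + 4 * b * ln (2 / \<beta>)}"
  proof -
    have "b * ln D \<ge> 0" and "T = - 2 * b * ln (2 / \<beta>)"
      using \<open>b > 0\<close> \<open>1 \<le> D\<close> by (simp_all add: T_def b_def)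
    then have "\<bar>q \<tau>\<bar> \<le> 2 * b * ln D + 4 * b * ln (2 / \<beta>)"
      if "T - 2 * b * ln (2 / \<beta>) - b * ln D < q \<tau>" for \<tau>
      using that Q_del_deg_nonpos[of V E \<tau>] by (simp add: q_def)
    then show ?thesis
      by (intro N.finite_measure_mono) (blast, measurable)
  qed
  finally show ?thesis
    by (simp add: b_def D_def q_def T_def)
qed

end
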